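(* Let $\mathcal{F}\subset K[x_1,\ldots,x_n]$ be a chordal polynomial set with $x_1<\cdots<x_n$ as a perfect elimination ordering. Let $\mathcal{T}_1,\ldots,\mathcal{T}_r$ be the triangular sets computed by Wang's method applied to $\mathcal{F}$, i.e. the sets $\mathcal{P}$ from triples $(\mathcal{P},\mathcal{Q},0)\in\mathcal{N}(\mathcal{F})$ (reached by the algorithm) such that $\mathcal{P}$ contains no nonzero constant. Then $G(\mathcal{T}_j)\subseteq G(\mathcal{F})$ for $j=1,\ldots,r$.
   Context: Let $K$ be a field and $K[x_1,\ldots,x_n]$ the polynomial ring, with the variables ordered $x_1<\cdots<x_n$. For a polynomial $F$, $\mathrm{supp}(F)$ is the set of variables effectively appearing in $F$. For a set of polynomials $\mathcal{P}$, $\mathrm{supp}(\mathcal{P})=\bigcup_{F\in\mathcal{P}}\mathrm{supp}(F)$. For a nonconstant $F$, $\mathrm{lv}(F)$ is the greatest variable in $\mathrm{supp}(F)$. For a polynomial set $\mathcal{P}$ and $1\le i\le n$, $\mathcal{P}^{(i)}=\{P\in\mathcal{P}:\mathrm{lv}(P)=x_i\}$; constants belong to no $\mathcal{P}^{(i)}$. The associated graph $G(\mathcal{P})$ is the undirected graph whose vertex set is $\mathrm{supp}(\mathcal{P})$, with an edge between distinct $x_i,x_j$ iff some $F\in\mathcal{P}$ has $x_i,x_j\in\mathrm{supp}(F)$. For graphs, $G\subseteq G'$ means that $G$ is a subgraph of $G'$, i.e. both the vertex set and the edge set are contained. An ordering of the vertices of a graph is a perfect elimination ordering if, for every vertex $v$,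 the set consisting of $v$ and all neighbours of $v$ smaller than $v$ is a clique. A polynomial set $\mathcal{P}$ is called chordal with $x_1<\cdots<x_n$ as a perfect elimination ordering if the restriction of this ordering to $\mathrm{supp}(\mathcal{P})$ is a perfect elimination ordering of $G(\mathcal{P})$. For a nonconstant polynomial $F$ with $\mathrm{lv}(F)=x_k$, write $F=I x_k^d+R$ with $d=\deg(F,x_k)$, $I\in K[x_1,\ldots,x_{k-1}]$, and $\deg(R,x_k)<d$. Then $\mathrm{ini}(F)=I$ is the initial of $F$ and $\mathrm{tail}(F)=R$ is the tail of $F$. For $\mathrm{lv}(T)=x_i$, $\mathrm{prem}(P,T)$ is the pseudo-remainder of $P$ by $T$ with respect to $x_i$. The zero polynomial has empty support. Wang's decomposition tree: $\mathcal{N}(\mathcal{F})$ is the smallest set of triples $(\mathcal{P},\mathcal{Q},i)$, where $\mathcal{P},\mathcal{Q}$ are polynomial sets and $0\le i\le n$, satisfying the following: - $(\mathcal{F},\emptyset,n)\in\mathcal{N}(\mathcal{F})$. - If $(\mathcal{P},\mathcal{Q},i)\in\mathcal{N}(\mathcal{F})$ with $i\ge1$ and $\#\mathcal{P}^{(i)}>1$, then for every $T\in\mathcal{P}^{(i)}$ of minimal degree in $x_i$ among the elements of $\mathcal{P}^{(i)}$, both of the following triples belong to $\mathcal{N}(\mathcal{F})$: - the left child $\big((\mathcal{P}\setminus\mathcal{P}^{(i)})\cup\{T\}\cup\{\mathrm{prem}(P,T):P\in\mathcal{P}^{(i)}\},\ \mathcal{Q}\cup\{\mathrm{ini}(T)\},\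 i\big)$; - the right child $\big((\mathcal{P}\setminus\{T\})\cup\{\mathrm{ini}(T),\mathrm{tail}(T)\},\ \mathcal{Q},\ i\big)$. - If $(\mathcal{P},\mathcal{Q},i)\in\mathcal{N}(\mathcal{F})$ with $i\ge1$ and $\#\mathcal{P}^{(i)}\le1$, then $(\mathcal{P},\mathcal{Q},i-1)\in\mathcal{N}(\mathcal{F})$. Wang's method starts from $(\mathcal{F},\emptyset,n)$ and generates triples of $\mathcal{N}(\mathcal{F})$ according to these rules. It outputs the pairs $(\mathcal{P},\mathcal{Q})$ with $(\mathcal{P},\mathcal{Q},0)$ reached and $\mathcal{P}$ containing no nonzero constant. *)

theory Defs
  imports "HOL-Library.Poly_Mapping" "HOL-Computational_Algebra.Polynomial"
begin

text \<open>Multivariate polynomials over K: finitely supported maps from monomials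
  (exponent vectors, variable x_i is index i) to coefficients.\<close>

type_synonym 'a mpoly = "(nat \<Rightarrow>\<^sub>0 nat) \<Rightarrow>\<^sub>0 'a"

definition mvars :: "'a::zero mpoly \<Rightarrow> nat set" where
  "mvars p = (\<Union>m\<in>Poly_Mapping.keys p. Poly_Mapping.keys m)"

definition set_vars :: "'a::zero mpoly set \<Rightarrow> nat set" where
  "set_vars P = (\<Union>p\<in>P. mvars p)"

definition lv :: "'a::zero mpoly \<Rightarrow> nat" where
  "lv p = Max (mvars p)"

definition Var :: "nat \<Rightarrow> 'a::{zero,one} mpoly" where
  "Var k = Poly_Mapping.single (Poly_Mapping.single k 1) 1"

text \<open>View p as a univariate polynomial in x_k with coefficients not involving x_k.\<close>
definition to_univ :: "nat \<Rightarrow> 'a::comm_ring_1 mpoly \<Rightarrow> 'a mpoly poly" where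
  "to_univ k p = (\<Sum>m\<in>Poly_Mapping.keys p. monom (Poly_Mapping.single (Poly_Mapping.update k 0 m) (Poly_Mapping.lookup p m)) (Poly_Mapping.lookup m k))"

definition from_univ :: "nat \<Rightarrow> 'a::comm_ring_1 mpoly poly \<Rightarrow> 'a mpoly" where
  "from_univ k q = poly q (Var k)"

definition deg_in :: "nat \<Rightarrow> 'a::comm_ring_1 mpoly \<Rightarrow> nat" where
  "deg_in k p = Polynomial.degree (to_univ k p)"

definition ini :: "'a::comm_ring_1 mpoly \<Rightarrow> 'a mpoly" where
  "ini p = lead_coeff (to_univ (lv p) p)"

definition tail :: "'a::comm_ring_1 mpoly \<Rightarrow> 'a mpoly" where
  "tail p = p - ini p * Var (lv p) ^ deg_in (lv p) p"

definition prem :: "'a::field mpoly \<Rightarrow> 'a mpoly \<Rightarrow> 'a mpoly" where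
  "prem P T = from_univ (lv T) (pseudo_mod (to_univ (lv T) P) (to_univ (lv T) T))"

definition level :: "'a::zero mpoly set \<Rightarrow> nat \<Rightarrow> 'a mpoly set" where
  "level P i = {p \<in> P. mvars p \<noteq> {} \<and> lv p = i}"

text \<open>Associated graph: vertices set_vars P, undirected edges as symmetric pairs.\<close>
definition graph_edges :: "'a::zero mpoly set \<Rightarrow> (nat \<times> nat) set" where
  "graph_edges P = {(u, v). u \<noteq> v \<and> (\<exists>p\<in>P. u \<in> mvars p \<and> v \<in> mvars p)}"

definition subgraph_of :: "'a::zero mpoly set \<Rightarrow> 'b::zero mpoly set \<Rightarrow> bool" where
  "subgraph_of P F \<longleftrightarrow> set_vars P \<subseteq> set_vars F \<and> graph_edges P \<subseteq> graph_edges F"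

text \<open>The natural order on variable indices is a perfect elimination ordering of G(P).\<close>
definition chordal_peo :: "'a::zero mpoly set \<Rightarrow> bool" where
  "chordal_peo P \<longleftrightarrow> (\<forall>v\<in>set_vars P.
     (let C = insert v {u \<in> set_vars P. u < v \<and> (u, v) \<in> graph_edges P}
      in \<forall>a\<in>C. \<forall>b\<in>C. a \<noteq> b \<longrightarrow> (a, b) \<in> graph_edges P))"

inductive_set wang_tree :: "nat \<Rightarrow> 'a::field mpoly set \<Rightarrow> ('a mpoly set \<times> 'a mpoly set \<times> nat) set"
  for n :: nat and F :: "'a mpoly set" where
  root: "(F, {}, n) \<in> wang_tree n F"
| left: "\<lbrakk>(P, Q, i) \<in> wang_tree n F; 1 \<le> i;
          \<exists>a\<in>level P i. \<exists>b\<in>level P i. a \<noteq> b;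
          T \<in> level P i; \<forall>p\<in>level P i. deg_in i T \<le> deg_in i p\<rbrakk>
        \<Longrightarrow> ((P - level P i) \<union> {T} \<union> (\<lambda>p. prem p T) ` level P i, Q \<union> {ini T}, i)
              \<in> wang_tree n F"
| right: "\<lbrakk>(P, Q, i) \<in> wang_tree n F; 1 \<le> i;
          \<exists>a\<in>level P i. \<exists>b\<in>level P i. a \<noteq> b;
          T \<in> level P i; \<forall>p\<in>level P i. deg_in i T \<le> deg_in i p\<rbrakk>
        \<Longrightarrow> ((P - {T}) \<union> {ini T, tail T}, Q, i) \<in> wang_tree n F"
| down: "\<lbrakk>(P, Q, i) \<in> wang_tree n F; 1 \<le> i;
          \<forall>a\<in>level P i. \<forall>b\<in>level P i. a = b\<rbrakk>
        \<Longrightarrow> (P, Q, i - 1) \<in> wang_tree n F"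

end

theory Submission
  imports Defs
begin

text \<open>Every polynomial occurring at a node of Wang's tree has a clique of \<open>G(F)\<close> as its set of
  variables. This holds at the root, and the initial, the tail and the pseudo-remainder by \<open>T\<close>
  only involve variables of their arguments. For the pseudo-remainder of \<open>P\<close> by \<open>T\<close>, both \<open>P\<close> and
  \<open>T\<close> have leading variable \<open>x\<^sub>i\<close>, so their variable sets are cliques with the same greatest
  vertex \<open>x\<^sub>i\<close>; by the perfect elimination property both lie in the clique formed by \<open>x\<^sub>i\<close> and its
  smaller neighbours, and so does their union. Edges of \<open>G(T)\<close> then are edges of \<open>G(F)\<close>.\<close>

lemma mvars_zero [simp]: "mvars 0 = {}"
  by (simp add: mvars_def)

lemma mvars_one [simp]: "mvars (1 :: 'a::zero_neq_one mpoly) = {}"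
  by (simp add: mvars_def)

lemma finite_mvars [simp]: "finite (mvars p)"
  by (simp add: mvars_def)

lemma mvars_add: "mvars (p + q) \<subseteq> mvars p \<union> mvars q"
  unfolding mvars_def using Poly_Mapping.keys_add[of p q] by blast

lemma mvars_diff: "mvars (p - q :: 'a::ab_group_add mpoly) \<subseteq> mvars p \<union> mvars q"
  unfolding mvars_def using Poly_Mapping.keys_diff[of p q] by blast

lemma mvars_mult: "mvars (p * q :: 'a::comm_semiring_1 mpoly) \<subseteq> mvars p \<union> mvars q"
proof
  fix x assume "x \<in> mvars (p * q)"
  then obtain m where m: "m \<in> Poly_Mapping.keys (p * q)" "x \<in> Poly_Mapping.keys m"
    unfolding mvars_def by blast
  then obtain a b where "m = a + b" "a \<in> Poly_Mapping.keys p" "b \<in> Poly_Mapping.keys q"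
    using Poly_Mapping.keys_mult[of p q] by blast
  then show "x \<in> mvars p \<union> mvars q"
    using m(2) Poly_Mapping.keys_add[of a b] unfolding mvars_def by blast
qed

lemma mvars_sum: "mvars (sum f A) \<subseteq> (\<Union>i\<in>A. mvars (f i))"
  unfolding mvars_def using Poly_Mapping.keys_sum[of f A] by blast

lemma mvars_power: "mvars (p ^ k :: 'a::comm_semiring_1 mpoly) \<subseteq> mvars p"
  by (induction k) (use mvars_mult in fastforce)+

lemma mvars_Var: "mvars (Var k :: 'a::comm_semiring_1 mpoly) \<subseteq> {k}"
  unfolding mvars_def Var_def by auto

lemma lv_in_mvars: "mvars p \<noteq> {} \<Longrightarrow> lv p \<in> mvars p"
  unfolding lv_def by simp

lemma mvars_coeff_to_univ: "mvars (coeff (to_univ k p) j) \<subseteq> mvars p"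
proof -
  let ?c = "\<lambda>m. Poly_Mapping.single (Poly_Mapping.update k 0 m) (Poly_Mapping.lookup p m)"
  have "coeff (to_univ k p) j =
      (\<Sum>m\<in>Poly_Mapping.keys p. coeff (monom (?c m) (Poly_Mapping.lookup m k)) j)"
    unfolding to_univ_def by (simp add: coeff_sum)
  also have "mvars \<dots> \<subseteq> mvars p"
  proof (rule order.trans[OF mvars_sum], rule UN_least)
    fix m assume "m \<in> Poly_Mapping.keys p"
    then have "mvars (?c m) \<subseteq> mvars p"
      unfolding mvars_def by (auto simp: Poly_Mapping.keys_update)
    then show "mvars (coeff (monom (?c m) (Poly_Mapping.lookup m k)) j) \<subseteq> mvars p"
      by (auto simp: coeff_monom)
  qed
  finally show ?thesis .
qed

definition coeff_vars_within :: "nat set \<Rightarrow> 'a::comm_ring_1 mpoly poly \<Rightarrow> bool" where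
  "coeff_vars_within V p \<longleftrightarrow> (\<forall>i. mvars (coeff p i) \<subseteq> V)"

lemma coeff_vars_withinI: "(\<And>i. mvars (coeff p i) \<subseteq> V) \<Longrightarrow> coeff_vars_within V p"
  unfolding coeff_vars_within_def by blast

lemma coeff_vars_withinD: "coeff_vars_within V p \<Longrightarrow> mvars (coeff p i) \<subseteq> V"
  unfolding coeff_vars_within_def by blast

lemma coeff_vars_within_to_univ: "mvars p \<subseteq> V \<Longrightarrow> coeff_vars_within V (to_univ k p)"
  using mvars_coeff_to_univ by (blast intro: coeff_vars_withinI)

lemma coeff_vars_within_zero: "coeff_vars_within V 0"
  by (rule coeff_vars_withinI) simp

lemma coeff_vars_within_monom: "mvars c \<subseteq> V \<Longrightarrow> coeff_vars_within V (monom c k)"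
  by (rule coeff_vars_withinI) (simp add: coeff_monom)

lemma coeff_vars_within_smult:
  "mvars c \<subseteq> V \<Longrightarrow> coeff_vars_within V p \<Longrightarrow> coeff_vars_within V (smult c p)"
  using mvars_mult[of c] by (fastforce intro!: coeff_vars_withinI dest: coeff_vars_withinD)

lemma coeff_vars_within_add:
  "coeff_vars_within V p \<Longrightarrow> coeff_vars_within V q \<Longrightarrow> coeff_vars_within V (p + q)"
  using mvars_add by (fastforce intro!: coeff_vars_withinI dest: coeff_vars_withinD)

lemma coeff_vars_within_diff:
  "coeff_vars_within V p \<Longrightarrow> coeff_vars_within V q \<Longrightarrow> coeff_vars_within V (p - q)"
  using mvars_diff by (fastforce intro!: coeff_vars_withinI dest: coeff_vars_withinD)

lemma coeff_vars_within_mult: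
  assumes p: "coeff_vars_within V p" and q: "coeff_vars_within V q"
  shows "coeff_vars_within V (p * q)"
proof (rule coeff_vars_withinI)
  fix n
  have "mvars (coeff (p * q) n) \<subseteq> (\<Union>i\<le>n. mvars (coeff p i * coeff q (n - i)))"
    unfolding coeff_mult by (rule mvars_sum)
  also have "\<dots> \<subseteq> V"
    using mvars_mult coeff_vars_withinD[OF p] coeff_vars_withinD[OF q] by blast
  finally show "mvars (coeff (p * q) n) \<subseteq> V" .
qed

lemma coeff_vars_within_pseudo_divmod_main:
  assumes "mvars lc \<subseteq> V" "coeff_vars_within V q" "coeff_vars_within V r"
    and "coeff_vars_within V d" "pseudo_divmod_main lc q r d dr k = (q', r')"
  shows "coeff_vars_within V r'"
  using assms
proof (induction k arbitrary: q r dr)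
  case 0
  then show ?case by simp
next
  case (Suc k)
  have c: "mvars (coeff r dr) \<subseteq> V"
    using Suc.prems(3) by (rule coeff_vars_withinD)
  show ?case
  proof (rule Suc.IH[OF Suc.prems(1) _ _ Suc.prems(4)])
    show "coeff_vars_within V (smult lc q + monom (coeff r dr) k)"
      by (intro coeff_vars_within_add coeff_vars_within_smult coeff_vars_within_monom
          Suc.prems(1,2) c)
    show "coeff_vars_within V (smult lc r - monom (coeff r dr) k * d)"
      by (intro coeff_vars_within_diff coeff_vars_within_smult coeff_vars_within_mult
          coeff_vars_within_monom Suc.prems(1,3,4) c)
    show "pseudo_divmod_main lc (smult lc q + monom (coeff r dr) k)
        (smult lc r - monom (coeff r dr) k * d) d (dr - 1) k = (q', r')"
      using Suc.prems(5) by (simp add: Let_def)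
  qed
qed

lemma coeff_vars_within_pseudo_mod:
  assumes f: "coeff_vars_within V f" and g: "coeff_vars_within V g"
  shows "coeff_vars_within V (pseudo_mod f g)"
proof (cases "g = 0")
  case True
  then show ?thesis using f by (simp add: pseudo_mod_def pseudo_divmod_def)
next
  case False
  obtain q' r' where e: "pseudo_divmod_main (lead_coeff g) 0 f g (degree f)
      (1 + length (coeffs f) - length (coeffs g)) = (q', r')"
    by (metis prod.exhaust)
  then have "pseudo_mod f g = r'"
    using False by (simp add: pseudo_mod_def pseudo_divmod_def)
  moreover have "coeff_vars_within V r'"
    using coeff_vars_withinD[OF g] coeff_vars_within_zero f g e
    by (rule coeff_vars_within_pseudo_divmod_main)
  ultimately show ?thesis by simp
qed

lemma mvars_from_univ:
  assumes q: "coeff_vars_within V q" and k: "k \<in> V"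
  shows "mvars (from_univ k q) \<subseteq> V"
  unfolding from_univ_def poly_altdef
proof (rule order.trans[OF mvars_sum], rule UN_least)
  fix i
  have "mvars (Var k ^ i :: 'a mpoly) \<subseteq> {k}"
    using mvars_power mvars_Var by (rule order.trans)
  then show "mvars (coeff q i * Var k ^ i) \<subseteq> V"
    using mvars_mult[of "coeff q i"] coeff_vars_withinD[OF q, of i] k by blast
qed

lemma mvars_ini: "mvars (ini p) \<subseteq> mvars p"
  unfolding ini_def by (rule mvars_coeff_to_univ)

lemma mvars_tail:
  fixes p :: "'a::comm_ring_1 mpoly"
  assumes "mvars p \<noteq> {}"
  shows "mvars (tail p) \<subseteq> mvars p"
proof -
  have "mvars (Var (lv p) ^ deg_in (lv p) p :: 'a mpoly) \<subseteq> mvars p"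
    using mvars_power mvars_Var lv_in_mvars[OF assms] by blast
  then have "mvars (ini p * Var (lv p) ^ deg_in (lv p) p) \<subseteq> mvars p"
    using mvars_mult mvars_ini by blast
  then show ?thesis
    unfolding tail_def using mvars_diff by blast
qed

lemma mvars_prem: "mvars T \<noteq> {} \<Longrightarrow> mvars (prem p T) \<subseteq> mvars p \<union> mvars T"
  unfolding prem_def
  by (intro mvars_from_univ coeff_vars_within_pseudo_mod coeff_vars_within_to_univ)
    (use lv_in_mvars in blast)+

definition clique :: "'a::zero mpoly set \<Rightarrow> nat set \<Rightarrow> bool" where
  "clique F C \<longleftrightarrow> C \<subseteq> set_vars F \<and> (\<forall>a\<in>C. \<forall>b\<in>C. a \<noteq> b \<longrightarrow> (a, b) \<in> graph_edges F)"

lemma clique_subset: "clique F B \<Longrightarrow> A \<subseteq> B \<Longrightarrow> clique F A"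
  unfolding clique_def by blast

lemma clique_mvars: "p \<in> F \<Longrightarrow> clique F (mvars p)"
  unfolding clique_def set_vars_def graph_edges_def by blast

lemma subgraph_of_if_cliques: "(\<And>p. p \<in> P \<Longrightarrow> clique F (mvars p)) \<Longrightarrow> subgraph_of P F"
  unfolding subgraph_of_def clique_def set_vars_def[of P] graph_edges_def[of P] by blast

lemma clique_below_max:
  assumes ch: "chordal_peo F" and A: "clique F A" "finite A" "A \<noteq> {}"
  defines "C \<equiv> insert (Max A) {u \<in> set_vars F. u < Max A \<and> (u, Max A) \<in> graph_edges F}"
  shows "A \<subseteq> C" and "clique F C"
proof -
  have vA: "Max A \<in> A"
    using A by simp
  then have vF: "Max A \<in> set_vars F"
    using A(1) unfolding clique_def by blast
  show "A \<subseteq> C"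
  proof
    fix a assume a: "a \<in> A"
    show "a \<in> C"
    proof (cases "a = Max A")
      case False
      then have "a < Max A"
        using a A(2) by (simp add: order.not_eq_order_implies_strict)
      with a vA False A(1) show ?thesis
        unfolding C_def clique_def by blast
    qed (simp add: C_def)
  qed
  show "clique F C"
    using bspec[OF ch[unfolded chordal_peo_def] vF] vF
    unfolding clique_def C_def Let_def by blast
qed

lemma clique_Un_same_max:
  assumes "chordal_peo F"
    and "clique F A" "finite A" "A \<noteq> {}"
    and "clique F B" "finite B" "B \<noteq> {}"
    and "Max A = Max B"
  shows "clique F (A \<union> B)"
  using clique_below_max[OF assms(1-4)] clique_below_max[OF assms(1,5-7)] assms(8)
  by (metis clique_subset le_sup_iff)

lemma clique_mvars_prem:
  assumes "chordal_peo F" "p \<in> level P i" "T \<in> level P i"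
    and "clique F (mvars p)" "clique F (mvars T)"
  shows "clique F (mvars (prem p T))"
proof -
  have "mvars p \<noteq> {}" "mvars T \<noteq> {}" "Max (mvars p) = Max (mvars T)"
    using assms(2,3) unfolding level_def lv_def by auto
  then have "clique F (mvars p \<union> mvars T)"
    by (intro clique_Un_same_max assms(1,4,5) finite_mvars)
  then show ?thesis
    using mvars_prem[OF \<open>mvars T \<noteq> {}\<close>] clique_subset by blast
qed

lemma wang_tree_clique_mvars:
  assumes "chordal_peo F" "(P, Q, i) \<in> wang_tree n F" "p \<in> P"
  shows "clique F (mvars p)"
  using assms(2,3)
proof (induction arbitrary: p rule: wang_tree.induct)
  case root
  then show ?case by (rule clique_mvars)
next
  case (left P Q i T)
  have "T \<in> P"
    using left.hyps(4) unfolding level_def by blast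
  then show ?case
    using left.prems left.IH clique_mvars_prem[OF assms(1) _ left.hyps(4)]
    unfolding level_def by blast
next
  case (right P Q i T)
  have T: "T \<in> P" "mvars T \<noteq> {}"
    using right.hyps(4) unfolding level_def by auto
  then have "clique F (mvars T)"
    using right.IH by blast
  then show ?case
    using right.prems right.IH mvars_ini[of T] mvars_tail[OF T(2)] clique_subset by blast
next
  case (down P Q i)
  then show ?case by blast
qed

theorem corollary4p4:
  fixes n :: nat and F :: "'a::field mpoly set"
  assumes "finite F"
    and "\<forall>f\<in>F. mvars f \<subseteq> {1..n}"
    and "chordal_peo F"
    and "(T, Q, 0) \<in> wang_tree n F"
    and "\<forall>p\<in>T. mvars p = {} \<longrightarrow> p = 0"
  shows "subgraph_of T F"
  using wang_tree_clique_mvars[OF assms(3,4)] by (rule subgraph_of_if_cliques)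

end
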